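(* Let $r\ge 2$ and $m$ be integers with $0\le 2m\le r$, $n=2r-4m$, and let $f:S^2(S^r(\mathbb{C}^2))\to S^{n}(\mathbb{C}^2)$ be an $\mathfrak{sl}_2(\mathbb{C})$-equivariant linear map, written $f=\sum_{k=0}^n q_k w_k$. Then there is $\lambda\in\mathbb{C}$ such that for all $0\le i,j\le r$, $$q_0(x_ix_j)=\begin{cases}(-1)^i\binom{2m}{i}\lambda & \text{if } j=2m-i,\\ 0&\text{otherwise.}\end{cases}$$ In particular, if $\lambda\in\mathbb{Q}$, then $q_k(x_ix_j)\in\mathbb{Q}$ for every $0\le k\le n$ and $0\le i,j\le r$.
   Context: $\mathfrak{sl}_2(\mathbb{C})$ has basis $X=\begin{pmatrix}0&1\\0&0\end{pmatrix}$, $H=\begin{pmatrix}1&0\\0&-1\end{pmatrix}$, $Y=\begin{pmatrix}0&0\\1&0\end{pmatrix}$, acting on the irreducible modules $S^d(\mathbb{C}^2)$. Let $x_0\in S^r(\mathbb{C}^2)$ be a highest weight vector and $x_i=Y^ix_0/i!$ ($0\le i\le r$), so $Yx_i=(i+1)x_{i+1}$, $Xx_i=(r-i+1)x_{i-1}$, $Hx_i=(r-2i)x_i$. Let $w_0\in S^n(\mathbb{C}^2)$ be a highest weight vector and $w_k=Y^kw_0/k!$ ($0\le k\le n$). Writing $f=\sum_{k=0}^n q_kw_k$ means $f(u)=\sum_k q_k(u)w_k$ for linear forms $q_k$ on $S^2(S^r(\mathbb{C}^2))$; $q_k(x_ix_j)$ denotes the value on the product $x_ix_j\in S^2(S^r(\mathbb{C}^2))$.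 *)

theory Defs
  imports Complex_Main
begin

datatype sl2gen = GX | GY | GH

text \<open>Action of a generator on S^d(C^2), vectors given by coefficient functions
  v :: nat => complex w.r.t. the basis v_0,...,v_d with v_i = Y^i v_0 / i!
  (coefficients at indices > d are ignored/zero).\<close>
fun sl2_act :: "sl2gen \<Rightarrow> nat \<Rightarrow> (nat \<Rightarrow> complex) \<Rightarrow> nat \<Rightarrow> complex" where
  "sl2_act GY d v k = (if 1 \<le> k \<and> k \<le> d then of_nat k * v (k - 1) else 0)"
| "sl2_act GX d v k = (if k < d then of_nat (d - k) * v (Suc k) else 0)"
| "sl2_act GH d v k = (if k \<le> d then (of_nat d - 2 * of_nat k) * v k else 0)"

definition basis_vec :: "nat \<Rightarrow> nat \<Rightarrow> complex" where
  "basis_vec i = (\<lambda>a. if a = i then 1 else 0)"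

text \<open>A linear map f : S^2(S^r(C^2)) -> S^n(C^2) is given by its values on the
  products x_i x_j (0 <= i,j <= r): F i j k = q_k(x_i x_j), the coefficient of w_k
  in f(x_i x_j).  Since x_i x_j = x_j x_i, F i j = F j i.  Equivariance is
  f(Z.(x_i x_j)) = Z.f(x_i x_j) for the generators Z, where
  Z.(x_i x_j) = (Z x_i) x_j + x_i (Z x_j).\<close>
definition sym2_map :: "nat \<Rightarrow> nat \<Rightarrow> (nat \<Rightarrow> nat \<Rightarrow> nat \<Rightarrow> complex) \<Rightarrow> bool" where
  "sym2_map r n F \<longleftrightarrow>
     (\<forall>i\<le>r. \<forall>j\<le>r. F i j = F j i) \<and>
     (\<forall>i\<le>r. \<forall>j\<le>r. \<forall>k>n. F i j k = 0)"

definition sl2_equivariant_sym2 :: "nat \<Rightarrow> nat \<Rightarrow> (nat \<Rightarrow> nat \<Rightarrow> nat \<Rightarrow> complex) \<Rightarrow> bool" where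
  "sl2_equivariant_sym2 r n F \<longleftrightarrow> sym2_map r n F \<and>
     (\<forall>g. \<forall>i\<le>r. \<forall>j\<le>r.
        (\<lambda>k. (\<Sum>a\<le>r. sl2_act g r (basis_vec i) a * F a j k)
            + (\<Sum>b\<le>r. sl2_act g r (basis_vec j) b * F i b k))
        = sl2_act g n (F i j))"

end

theory Submission
  imports Defs
begin

text \<open>H forces q_0(x_i x_j) = 0 unless the weights match,
  i.e. i + j = 2m.  Since Y v never has a w_0-component, the coefficient of w_0 in
  f(Y(x_i x_j)) vanishes, which ties q_0(x_{i+1} x_j) to q_0(x_i x_{j+1}); along the
  antidiagonal i + j = 2m this is the binomial recurrence.  Finally X raises the index k and
  expresses (n - k) q_{k+1} through q_k with integer factors, so rationality propagates.\<close>

lemma sum_sl2_act_GY_basis_vec: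
  "(\<Sum>a\<le>r. sl2_act GY r (basis_vec i) a * G a) = (if i < r then of_nat (Suc i) * G (Suc i) else 0)"
proof -
  have "(\<Sum>a\<le>r. sl2_act GY r (basis_vec i) a * G a)
      = (\<Sum>a\<le>r. if a = Suc i then of_nat (Suc i) * G (Suc i) else 0)"
    by (rule sum.cong) (auto simp: basis_vec_def)
  then show ?thesis by simp
qed

lemma sum_sl2_act_GX_basis_vec:
  assumes "i \<le> r"
  shows "(\<Sum>a\<le>r. sl2_act GX r (basis_vec i) a * G a)
       = (if 1 \<le> i then of_nat (r - i + 1) * G (i - 1) else 0)"
proof -
  have "(\<Sum>a\<le>r. sl2_act GX r (basis_vec i) a * G a)
      = (\<Sum>a\<le>r. if 1 \<le> i \<and> a = i - 1 then of_nat (r - i + 1) * G (i - 1) else 0)"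
    by (rule sum.cong) (use assms in \<open>auto simp: basis_vec_def Suc_diff_le\<close>)
  then show ?thesis using assms by (simp add: sum.If_cases)
qed

lemma sum_sl2_act_GH_basis_vec:
  assumes "i \<le> r"
  shows "(\<Sum>a\<le>r. sl2_act GH r (basis_vec i) a * G a) = (of_nat r - 2 * of_nat i) * G i"
proof -
  have "(\<Sum>a\<le>r. sl2_act GH r (basis_vec i) a * G a)
      = (\<Sum>a\<le>r. if a = i then (of_nat r - 2 * of_nat i) * G i else 0)"
    by (rule sum.cong) (auto simp: basis_vec_def)
  then show ?thesis using assms by simp
qed

lemma sl2_equivariant_sym2_coeff:
  assumes "sl2_equivariant_sym2 r n F" "i \<le> r" "j \<le> r"
  shows "(\<Sum>a\<le>r. sl2_act g r (basis_vec i) a * F a j k)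
       + (\<Sum>b\<le>r. sl2_act g r (basis_vec j) b * F i b k) = sl2_act g n (F i j) k"
proof -
  have "(\<lambda>k. (\<Sum>a\<le>r. sl2_act g r (basis_vec i) a * F a j k)
      + (\<Sum>b\<le>r. sl2_act g r (basis_vec j) b * F i b k)) = sl2_act g n (F i j)"
    using assms unfolding sl2_equivariant_sym2_def by blast
  then show ?thesis by (rule fun_cong)
qed

lemma sl2_equivariant_sym2_weight:
  assumes "sl2_equivariant_sym2 r n F" "i \<le> r" "j \<le> r" "k \<le> n"
    and "int (2 * r) - 2 * int i - 2 * int j \<noteq> int n - 2 * int k"
  shows "F i j k = 0"
proof -
  have "(of_nat r - 2 * of_nat i) * F i j k + (of_nat r - 2 * of_nat j) * F i j k
      = (of_nat n - 2 * of_nat k) * F i j k"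
    using sl2_equivariant_sym2_coeff[OF assms(1-3), of GH k] assms(4)
    unfolding sum_sl2_act_GH_basis_vec[OF assms(2)] sum_sl2_act_GH_basis_vec[OF assms(3)]
    by simp
  then have "(of_int (int (2 * r) - 2 * int i - 2 * int j - (int n - 2 * int k)) :: complex) * F i j k = 0"
    by (simp add: algebra_simps)
  then show ?thesis using assms(5) by (simp del: of_int_diff)
qed

lemma sl2_equivariant_sym2_Y_lowest:
  assumes "sl2_equivariant_sym2 r n F" "i < r" "j < r"
  shows "of_nat (Suc i) * F (Suc i) j 0 + of_nat (Suc j) * F i (Suc j) 0 = 0"
  using sl2_equivariant_sym2_coeff[OF assms(1), of i j GY 0] assms(2,3)
  unfolding sum_sl2_act_GY_basis_vec by simp

lemma sl2_equivariant_sym2_X_raise: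
  assumes "sl2_equivariant_sym2 r n F" "i \<le> r" "j \<le> r" "k < n"
  shows "of_nat (n - k) * F i j (Suc k)
       = (if 1 \<le> i then of_nat (r - i + 1) * F (i - 1) j k else 0)
       + (if 1 \<le> j then of_nat (r - j + 1) * F i (j - 1) k else 0)"
  using sl2_equivariant_sym2_coeff[OF assms(1-3), of GX k] assms(4)
  unfolding sum_sl2_act_GX_basis_vec[OF assms(2)] sum_sl2_act_GX_basis_vec[OF assms(3)]
  by simp

lemma Suc_times_binomial_Suc: "Suc k * (n choose Suc k) = (n - k) * (n choose k)"
  using binomial_absorption[of k n] binomial_absorb_comp[of n k] by simp

lemma antidiagonal_binomial:
  fixes G :: "nat \<Rightarrow> nat \<Rightarrow> 'a::field_char_0"
  assumes rec: "\<And>i j. i + j < d \<Longrightarrow> of_nat (Suc i) * G (Suc i) j + of_nat (Suc j) * G i (Suc j) = 0"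
    and "i \<le> d"
  shows "G i (d - i) = (-1) ^ i * of_nat (d choose i) * G 0 d"
  using \<open>i \<le> d\<close>
proof (induction i)
  case 0
  then show ?case by simp
next
  case (Suc i)
  have "Suc (d - Suc i) = d - i" using Suc.prems by simp
  then have "of_nat (Suc i) * G (Suc i) (d - Suc i) = - (of_nat (d - i) * G i (d - i))"
    using rec[of i "d - Suc i"] Suc.prems by (simp add: eq_neg_iff_add_eq_0)
  also have "\<dots> = - (of_nat ((d - i) * (d choose i)) * (-1) ^ i * G 0 d)"
    using Suc by simp
  also have "\<dots> = of_nat (Suc i) * ((-1) ^ Suc i * of_nat (d choose Suc i) * G 0 d)"
    unfolding Suc_times_binomial_Suc[symmetric] of_nat_mult by (simp add: algebra_simps)
  finally show ?case using mult_left_cancel[OF of_nat_neq_0] by blast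
qed

lemma sl2_equivariant_sym2_Rats:
  assumes "sl2_equivariant_sym2 r n F" "\<And>i j. i \<le> r \<Longrightarrow> j \<le> r \<Longrightarrow> F i j 0 \<in> \<rat>"
    and "k \<le> n" "i \<le> r" "j \<le> r"
  shows "F i j k \<in> \<rat>"
  using assms(3-5)
proof (induction k arbitrary: i j)
  case 0
  then show ?case using assms(2) by simp
next
  case (Suc k)
  have "of_nat (n - k) \<noteq> (0 :: complex)" using Suc.prems by simp
  then have "F i j (Suc k)
      = ((if 1 \<le> i then of_nat (r - i + 1) * F (i - 1) j k else 0)
       + (if 1 \<le> j then of_nat (r - j + 1) * F i (j - 1) k else 0)) / of_nat (n - k)"
    using sl2_equivariant_sym2_X_raise[OF assms(1), of i j k] Suc.prems
    by (simp add: field_simps)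
  moreover have "F (i - 1) j k \<in> \<rat>" "F i (j - 1) k \<in> \<rat>" using Suc by auto
  ultimately show ?case by simp
qed

theorem mainTheorem2:
  fixes r m n :: nat and F :: "nat \<Rightarrow> nat \<Rightarrow> nat \<Rightarrow> complex"
  assumes "r \<ge> 2" and "2 * m \<le> r" and "n = 2 * r - 4 * m"
    and "sl2_equivariant_sym2 r n F"
  shows "\<exists>lam::complex.
     (\<forall>i\<le>r. \<forall>j\<le>r. F i j 0 =
        (if j + i = 2 * m then (-1) ^ i * of_nat (2 * m choose i) * lam else 0)) \<and>
     (lam \<in> \<rat> \<longrightarrow> (\<forall>k\<le>n. \<forall>i\<le>r. \<forall>j\<le>r. F i j k \<in> \<rat>))"
proof -
  define lam where "lam = F 0 (2 * m) 0"
  have antidiagonal: "F i (2 * m - i) 0 = (-1) ^ i * of_nat (2 * m choose i) * lam"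
    if "i \<le> 2 * m" for i
    unfolding lam_def using assms(2,4) that
    by (intro antidiagonal_binomial sl2_equivariant_sym2_Y_lowest) auto
  have q0: "F i j 0 = (if j + i = 2 * m then (-1) ^ i * of_nat (2 * m choose i) * lam else 0)"
    if "i \<le> r" "j \<le> r" for i j
  proof (cases "j + i = 2 * m")
    case True
    then have "j = 2 * m - i" "i \<le> 2 * m" by auto
    then show ?thesis using True antidiagonal[of i] by simp
  next
    case False
    with assms(2,3) have "int (2 * r) - 2 * int i - 2 * int j \<noteq> int n - 2 * int 0" by linarith
    then show ?thesis using False sl2_equivariant_sym2_weight[OF assms(4) that] by simp
  qed
  moreover have "F i j k \<in> \<rat>" if "lam \<in> \<rat>" "k \<le> n" "i \<le> r" "j \<le> r" for i j k
    using sl2_equivariant_sym2_Rats[OF assms(4) _ that(2-4)] q0 that(1) by simp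
  ultimately show ?thesis by blast
qed

end
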